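(* Let $\{W_i\}_{i=1}^M$ be subspaces of $\mathbb{R}^N$ which do phase retrieval, and assume $\sum_{i=1}^M\dim(W_i)=2N-1$. Then $W_i\cap W_j=\{0\}$ for all $i\neq j$.
   Context: A family of subspaces $\{W_i\}_{i=1}^M$ of $\mathbb{R}^N$ with orthogonal projections $\{P_i\}_{i=1}^M$ does phase retrieval if for all $x,y\in\mathbb{R}^N$, $\|P_ix\|=\|P_iy\|$ for all $i$ implies $x=\pm y$. *)

theory Defs
  imports "HOL-Analysis.Analysis"
begin

definition orth_proj :: "'a::euclidean_space set \<Rightarrow> 'a \<Rightarrow> 'a" where
  "orth_proj W x = (THE p. p \<in> W \<and> (\<forall>w\<in>W. (x - p) \<bullet> w = 0))"

definition does_phase_retrieval :: "nat \<Rightarrow> (nat \<Rightarrow> 'a::euclidean_space set) \<Rightarrow> bool" where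
  "does_phase_retrieval M W \<longleftrightarrow>
     (\<forall>x y. (\<forall>i\<in>{1..M}. norm (orth_proj (W i) x) = norm (orth_proj (W i) y))
            \<longrightarrow> x = y \<or> x = - y)"

end

theory Submission imports Defs begin

text \<open>Suppose \<open>w \<noteq> 0\<close> lies in \<open>W\<^sub>i \<inter> W\<^sub>j\<close>. Choose orthogonal bases of all \<open>W\<^sub>k\<close>, those of \<open>W\<^sub>i\<close>
  and \<open>W\<^sub>j\<close> both containing \<open>w\<close>. Counted with repetition these are \<open>2N - 1\<close> vectors, and they
  can be split into a group of \<open>N\<close> vectors containing both copies of \<open>w\<close> (hence spanning a
  proper subspace) and a group of \<open>N - 1\<close> vectors. Nonzero vectors \<open>u\<close>, \<open>v\<close> orthogonal to
  the first and the second group respectively then satisfy \<open>P\<^sub>k u \<bottom> P\<^sub>k v\<close> for every \<open>k\<close>,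
  so \<open>\<parallel>P\<^sub>k (u + v)\<parallel> = \<parallel>P\<^sub>k (u - v)\<parallel>\<close>, although \<open>u + v \<noteq> \<plusminus>(u - v)\<close>.\<close>

lemma orthogonal_basis_subspace_containing:
  fixes W :: "'a::euclidean_space set"
  assumes "subspace W" "w \<in> W" "w \<noteq> 0"
  obtains B where "w \<in> B" "0 \<notin> B" "pairwise orthogonal B" "independent B"
    "card B = dim W" "span B = W"
proof -
  obtain U where U: "U \<inter> insert 0 {w} = {}" "pairwise orthogonal ({w} \<union> U)"
    "span ({w} \<union> U) = span ({w} \<union> W)"
    using orthogonal_extension_strong[of "{w}" W] by (auto simp: pairwise_def)
  have span: "span (insert w U) = W"
    using U(3) assms(1,2) by (simp add: insert_absorb span_eq_iff)
  have orth: "pairwise orthogonal (insert w U)" and nz: "0 \<notin> insert w U"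
    using U(1,2) assms(3) by auto
  have indep: "independent (insert w U)"
    using pairwise_orthogonal_independent[OF orth nz] .
  have "card (insert w U) = dim W"
    using dim_eq_card_independent[OF indep] span by (metis dim_span)
  with span orth nz indep show thesis
    using that[of "insert w U"] by blast
qed

lemma orth_proj_span_pairwise_orthogonal:
  fixes B :: "'a::euclidean_space set"
  assumes "pairwise orthogonal B"
  shows "orth_proj (span B) x = (\<Sum>b\<in>B. (b \<bullet> x / (b \<bullet> b)) *\<^sub>R b)"
proof -
  let ?p = "\<Sum>b\<in>B. (b \<bullet> x / (b \<bullet> b)) *\<^sub>R b"
  have "(x - ?p) \<bullet> w = 0" if "w \<in> span B" for w
    using Gram_Schmidt_step[OF assms that, of x] orthogonal_commute unfolding orthogonal_def
    by blast
  then have p: "?p \<in> span B \<and> (\<forall>w\<in>span B. (x - ?p) \<bullet> w = 0)"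
    by (simp add: span_sum span_mul span_base)
  have "q = ?p" if q: "q \<in> span B \<and> (\<forall>w\<in>span B. (x - q) \<bullet> w = 0)" for q
  proof -
    have "?p - q \<in> span B"
      using p q by (simp add: span_diff)
    then have "((x - q) - (x - ?p)) \<bullet> (?p - q) = 0"
      using p q by (simp add: inner_diff_left)
    then show "q = ?p"
      by simp
  qed
  with p show ?thesis
    unfolding orth_proj_def by (rule the_equality)
qed

text \<open>The projection of \<open>u\<close> only involves basis vectors not orthogonal to \<open>u\<close>, and these are
  orthogonal to \<open>v\<close>; so the projections of \<open>u\<close> and \<open>v\<close> are orthogonal.\<close>

lemma norm_orth_proj_add_eq_diff:
  fixes B :: "'a::euclidean_space set"
  assumes orth: "pairwise orthogonal B" and covers: "\<forall>b\<in>B. b \<bullet> u = 0 \<or> b \<bullet> v = 0"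
  shows "norm (orth_proj (span B) (u + v)) = norm (orth_proj (span B) (u - v))"
proof -
  define P where "P = orth_proj (span B)"
  have P: "P x = (\<Sum>b\<in>B. (b \<bullet> x / (b \<bullet> b)) *\<^sub>R b)" for x
    unfolding P_def by (rule orth_proj_span_pairwise_orthogonal[OF orth])
  have add: "P (u + v) = P u + P v" and diff: "P (u - v) = P u - P v"
    unfolding P by (simp_all add: inner_add_right inner_diff_right add_divide_distrib
        diff_divide_distrib scaleR_add_left scaleR_diff_left sum.distrib sum_subtractf)
  have "P u \<bullet> P v = (\<Sum>b\<in>B. (b \<bullet> u / (b \<bullet> b)) * (b \<bullet> P v))"
    unfolding P[of u] by (simp add: inner_sum_left)
  also have "\<dots> = (\<Sum>b\<in>B. (b \<bullet> u / (b \<bullet> b)) * (b \<bullet> v))"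
  proof (rule sum.cong)
    fix b assume "b \<in> B"
    then have "orthogonal b (v - P v)"
      unfolding P using Gram_Schmidt_step[OF orth] by (simp add: span_base)
    then show "(b \<bullet> u / (b \<bullet> b)) * (b \<bullet> P v) = (b \<bullet> u / (b \<bullet> b)) * (b \<bullet> v)"
      by (simp add: orthogonal_def inner_diff_right)
  qed simp
  also have "\<dots> = 0"
    using covers by (intro sum.neutral) auto
  finally have "orthogonal (P u) (P v)"
    by (simp add: orthogonal_def)
  then have "(norm (P u + P v))\<^sup>2 = (norm (P u - P v))\<^sup>2"
    using norm_add_Pythagorean[of "P u" "P v"] norm_add_Pythagorean[of "P u" "- P v"]
    by (simp add: orthogonal_def)
  then show ?thesis
    unfolding P_def[symmetric] add diff by (simp add: power2_eq_iff_nonneg)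
qed

lemma exists_nonzero_orthogonal_to_finite:
  fixes S :: "'a::euclidean_space set"
  assumes "finite S" "card S < DIM('a)"
  obtains u where "u \<noteq> 0" "\<forall>y\<in>S. orthogonal u y"
proof -
  have "dim S < DIM('a)"
    using dim_le_card[OF span_superset assms(1)] assms(2) by simp
  then show thesis
    using orthogonal_to_subspace_exists that by (meson span_base)
qed

text \<open>Put \<open>a\<close>, \<open>b\<close> and \<open>N - 2\<close> further indices into the first group, which then has at most
  \<open>N - 1\<close> distinct vectors, and the remaining at most \<open>N - 1\<close> indices into the second.\<close>

lemma exists_nonzero_pair_orthogonal_cover:
  fixes f :: "'i \<Rightarrow> 'a::euclidean_space"
  assumes "finite E" "card E < 2 * DIM('a)" "a \<in> E" "b \<in> E" "a \<noteq> b" "f a = f b"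
  obtains u v where "u \<noteq> 0" "v \<noteq> 0" "\<forall>x\<in>E. orthogonal u (f x) \<or> orthogonal v (f x)"
proof -
  define N where "N = DIM('a)"
  define R where "R = E - {a, b}"
  have R: "finite R" "card R = card E - 2"
    using assms(1,3-5) by (auto simp: R_def card_Diff_subset)
  have "2 \<le> card E"
    using assms(1,3-5) card_mono[of E "{a, b}"] by auto
  then have N: "2 \<le> N" "card R \<le> 2 * N - 3"
    using assms(2) R(2) by (auto simp: N_def)
  obtain S where S: "S \<subseteq> R" "card S = min (N - 2) (card R)" "finite S"
    using obtain_subset_with_card_n[of "min (N - 2) (card R)" R] by auto
  have "card (f ` insert a S) < N"
    using card_image_le[of "insert a S" f] card_insert_if[OF S(3), of a] S(2,3) N(1)
    by (auto split: if_splits)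
  then obtain u where u: "u \<noteq> 0" "\<forall>y\<in>f ` insert a S. orthogonal u y"
    using exists_nonzero_orthogonal_to_finite[of "f ` insert a S"] S(3) by (auto simp: N_def)
  have "card (f ` (R - S)) < N"
    using card_image_le[of "R - S" f] card_Diff_subset[OF S(3,1)] R(1) S(2) N by auto
  then obtain v where v: "v \<noteq> 0" "\<forall>y\<in>f ` (R - S). orthogonal v y"
    using exists_nonzero_orthogonal_to_finite[of "f ` (R - S)"] R(1) by (auto simp: N_def)
  have "orthogonal u (f x) \<or> orthogonal v (f x)" if "x \<in> E" for x
    using that u(2) v(2) assms(6) by (cases "x \<in> R - S") (auto simp: R_def)
  with u(1) v(1) show thesis
    using that by blast
qed

lemma phase_retrieval_imp_trivial_intersection:
  fixes W :: "nat \<Rightarrow> 'a::euclidean_space set"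
  assumes subsp: "\<forall>k\<in>{1..M}. subspace (W k)" and pr: "does_phase_retrieval M W"
    and dims: "(\<Sum>k=1..M. dim (W k)) < 2 * DIM('a)"
    and ij: "i \<in> {1..M}" "j \<in> {1..M}" "i \<noteq> j"
  shows "W i \<inter> W j = {0}"
proof (rule ccontr)
  assume "W i \<inter> W j \<noteq> {0}"
  then obtain w where w: "w \<in> W i" "w \<in> W j" "w \<noteq> 0"
    using subsp ij by (auto simp: subspace_0)
  have "\<exists>B. pairwise orthogonal B \<and> independent B \<and> card B = dim (W k) \<and> span B = W k
      \<and> (w \<in> W k \<longrightarrow> w \<in> B)" if "k \<in> {1..M}" for k
  proof (cases "w \<in> W k")
    case True
    then show ?thesis
      using orthogonal_basis_subspace_containing[of "W k" w] subsp that w(3) by metis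
  next
    case False
    then show ?thesis
      using orthogonal_basis_subspace[of "W k"] subsp that by metis
  qed
  then obtain B where B: "\<And>k. k \<in> {1..M} \<Longrightarrow> pairwise orthogonal (B k) \<and> independent (B k)
      \<and> card (B k) = dim (W k) \<and> span (B k) = W k \<and> (w \<in> W k \<longrightarrow> w \<in> B k)"
    by metis
  define E where "E = Sigma {1..M} B"
  have finB: "finite (B k)" if "k \<in> {1..M}" for k
    using B[OF that] independent_imp_finite by blast
  have "card E = (\<Sum>k=1..M. dim (W k))"
    unfolding E_def using finB B by (simp add: card_SigmaI)
  with dims have E: "finite E" "card E < 2 * DIM('a)"
    using finB by (auto simp: E_def)
  obtain u v where uv: "u \<noteq> 0" "v \<noteq> 0" "\<forall>x\<in>E. orthogonal u (snd x) \<or> orthogonal v (snd x)"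
    using exists_nonzero_pair_orthogonal_cover[OF E, where a = "(i, w)" and b = "(j, w)" and f = snd]
      B ij w by (auto simp: E_def)
  have "norm (orth_proj (W k) (u + v)) = norm (orth_proj (W k) (u - v))" if "k \<in> {1..M}" for k
    using norm_orth_proj_add_eq_diff[of "B k" u v] B[OF that] uv(3) that
    by (auto simp: E_def orthogonal_def inner_commute)
  then have "u + v = u - v \<or> u + v = - (u - v)"
    using pr unfolding does_phase_retrieval_def by blast
  with uv(1,2) show False
    by (auto simp: algebra_simps scaleR_2[symmetric])
qed

theorem mainTheorem9:
  fixes W :: "nat \<Rightarrow> (real ^ 'n) set" and M :: nat
  assumes subsp: "\<forall>i\<in>{1..M}. subspace (W i)"
    and pr: "does_phase_retrieval M W"
    and dimsum: "(\<Sum>i=1..M. dim (W i)) = 2 * CARD('n) - 1"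
  shows "\<forall>i\<in>{1..M}. \<forall>j\<in>{1..M}. i \<noteq> j \<longrightarrow> W i \<inter> W j = {0}"
  using phase_retrieval_imp_trivial_intersection[OF subsp pr] dimsum by simp

end
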